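(* Let $(b_n)_{n\ge1}$ be a sequence of positive real numbers. Then $(\theta(M_n)-\theta(m(n)))/b_n\to0$ in probability as $n\to\infty$ if and only if, for every $\varepsilon>0$, $$n\,y_{\Theta(\varepsilon b_n+\theta(m(n)))}\to0\quad\text{and}\quad n\,y_{\Theta(-\varepsilon b_n+\theta(m(n)))}\to\infty\quad(n\to\infty).$$
   Context: Let $\{X_n,n\ge1\}$ be independent, identically distributed random variables with values in $\mathbb{Z}_+=\{0,1,2,\dots\}$ such that $p_k=P[X_1=k]>0$ for every $k\in\mathbb{Z}_+$ (set $p_m=0$ for integers $m\le -1$). For $k\in\mathbb{Z}_+$ let $y_k=\sum_{i>k}p_i$, and set $y_m=1$ for integers $m\le-1$. Let $m(t)=\min\{j\in\mathbb{Z}_+: y_j<1/t\}$ for $t>0$. For the fixed integer $\delta$ define $s_k=p_{k+\delta}/y_{k-1}$ and $\theta(k)=\sum_{i=0}^k s_i$ for $k\in\mathbb{Z}_+$, and $\theta(\infty)=\sum_{i\ge0}s_i\le\infty$. For $t\in[s_0,\theta(\infty))$ let $\Theta(t)=\max\{k\in\mathbb{Z}_+:\theta(k)\le t\}$, so that $y_{\Theta(t)}=P[\theta(X_1)>t]$; for real $t$ outside this range, $y_{\Theta(t)}$ is to be read as $P[\theta(X_1)>t]$. Let $M_n=\max\{X_1,\dots,X_n\}$ for $n\ge1$. *)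

theory Defs
  imports "HOL-Probability.Probability"
begin

text \<open>All notions are parameterised by the point masses p k = P[X_1 = k] (k a natural number)
 and the fixed integer delta.\<close>

definition pz :: "(nat \<Rightarrow> real) \<Rightarrow> int \<Rightarrow> real" where
  "pz p m = (if m < 0 then 0 else p (nat m))"

definition yz :: "(nat \<Rightarrow> real) \<Rightarrow> int \<Rightarrow> real" where
  "yz p m = (if m < 0 then 1 else (\<Sum>i. p (Suc (nat m) + i)))"

definition mt :: "(nat \<Rightarrow> real) \<Rightarrow> real \<Rightarrow> nat" where
  "mt p t = (LEAST j::nat. yz p (int j) < 1 / t)"

definition sk :: "(nat \<Rightarrow> real) \<Rightarrow> int \<Rightarrow> nat \<Rightarrow> real" where
  "sk p \<delta> k = pz p (int k + \<delta>) / yz p (int k - 1)"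

definition theta :: "(nat \<Rightarrow> real) \<Rightarrow> int \<Rightarrow> nat \<Rightarrow> real" where
  "theta p \<delta> k = (\<Sum>i\<le>k. sk p \<delta> i)"

definition theta_inf :: "(nat \<Rightarrow> real) \<Rightarrow> int \<Rightarrow> ereal" where
  "theta_inf p \<delta> = (\<Sum>i. ereal (sk p \<delta> i))"

text \<open>Theta(t) = max { k : theta(k) \<le> t } (used for t in [s_0, theta(infinity))).\<close>
definition Theta :: "(nat \<Rightarrow> real) \<Rightarrow> int \<Rightarrow> real \<Rightarrow> nat" where
  "Theta p \<delta> t = (GREATEST k::nat. theta p \<delta> k \<le> t)"

text \<open>y_{Theta(t)}: equal to y at Theta(t) for t in [s_0, theta(infinity)), and read as
 tail t = P[theta(X_1) > t] otherwise.\<close>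
definition yTheta :: "(nat \<Rightarrow> real) \<Rightarrow> int \<Rightarrow> (real \<Rightarrow> real) \<Rightarrow> real \<Rightarrow> real" where
  "yTheta p \<delta> tail t =
     (if sk p \<delta> 0 \<le> t \<and> ereal t < theta_inf p \<delta> then yz p (int (Theta p \<delta> t)) else tail t)"

end

theory Submission
  imports Defs "HOL-Real_Asymp.Real_Asymp"
begin

text \<open>
  Since \<open>\<theta>\<close> is nondecreasing, \<open>\<theta>(M\<^sub>n)\<close> is the maximum of the i.i.d. variables
  \<open>\<theta>(X\<^sub>1), \<dots>, \<theta>(X\<^sub>n)\<close>, so with \<open>G(t) = P[\<theta>(X\<^sub>1) > t]\<close> we have
  \<open>P[\<theta>(M\<^sub>n) \<le> t] = (1 - G(t))\<^sup>n\<close>. The deviation event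
  \<open>|\<theta>(M\<^sub>n) - c\<^sub>n| > \<epsilon> b\<^sub>n\<close> contains \<open>\<theta>(M\<^sub>n) > c\<^sub>n + \<epsilon> b\<^sub>n\<close> and
  \<open>\<theta>(M\<^sub>n) \<le> c\<^sub>n - 2\<epsilon> b\<^sub>n\<close>, and is contained in the union of the first with
  \<open>\<theta>(M\<^sub>n) \<le> c\<^sub>n - \<epsilon> b\<^sub>n\<close>. Hence the convergence in probability is equivalent to
  \<open>(1 - G(c\<^sub>n + \<epsilon> b\<^sub>n))\<^sup>n \<rightarrow> 1\<close> and \<open>(1 - G(c\<^sub>n - \<epsilon> b\<^sub>n))\<^sup>n \<rightarrow> 0\<close> for all
  \<open>\<epsilon> > 0\<close>, i.e. to \<open>n G(c\<^sub>n + \<epsilon> b\<^sub>n) \<rightarrow> 0\<close> and \<open>n G(c\<^sub>n - \<epsilon> b\<^sub>n) \<rightarrow> \<infinity>\<close>.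
  Finally \<open>y\<^bsub>\<Theta>(t)\<^esub> = G(t)\<close> for every \<open>t\<close>, because \<open>\<theta>(k) > t \<longleftrightarrow> k > \<Theta>(t)\<close>
  on the range where \<open>\<Theta>\<close> is defined.
\<close>

lemma one_minus_power_le_inverse:
  fixes a :: real
  assumes "0 \<le> a" "a \<le> 1"
  shows "(1 - a) ^ n \<le> 1 / (1 + real n * a)"
proof -
  have "(1 - a) ^ n \<le> exp (- a) ^ n"
    using assms exp_ge_add_one_self[of "- a"] by (intro power_mono) auto
  also have "\<dots> = 1 / exp (real n * a)"
    by (simp add: exp_of_nat_mult[symmetric] exp_minus field_simps)
  also have "\<dots> \<le> 1 / (1 + real n * a)"
    using assms exp_ge_add_one_self[of "real n * a"]
    by (intro divide_left_mono) (auto simp: add_pos_nonneg)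
  finally show ?thesis .
qed

lemma exp_le_one_minus_power:
  fixes a :: real
  assumes "0 \<le> a" "a \<le> 1 / 2"
  shows "exp (- 2 * a * real n) \<le> (1 - a) ^ n"
proof -
  have "exp (- 2 * a) \<le> 1 / (1 + 2 * a)"
    using assms exp_ge_add_one_self[of "2 * a"] by (simp add: exp_minus field_simps)
  also have "\<dots> \<le> 1 - a"
    using assms mult_nonneg_nonneg[of a "1 - 2 * a"] by (simp add: field_simps)
  finally have "exp (- 2 * a) ^ n \<le> (1 - a) ^ n" by (intro power_mono) auto
  thus ?thesis by (simp add: exp_of_nat_mult[symmetric] mult_ac)
qed

lemma one_minus_power_tendsto_0_iff:
  fixes a :: "nat \<Rightarrow> real"
  assumes a: "\<And>n. 0 \<le> a n" "\<And>n. a n \<le> 1"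
  shows "(\<lambda>n. 1 - (1 - a n) ^ n) \<longlonglongrightarrow> 0 \<longleftrightarrow> (\<lambda>n. real n * a n) \<longlonglongrightarrow> 0"
proof
  define x where "x n = real n * a n" for n
  have x: "0 \<le> x n" for n using a by (simp add: x_def)
  assume lim: "(\<lambda>n. 1 - (1 - a n) ^ n) \<longlonglongrightarrow> 0"
  have "(\<lambda>n. x n / (1 + x n)) \<longlonglongrightarrow> 0"
  proof (rule tendsto_sandwich[OF _ _ tendsto_const lim])
    show "\<forall>\<^sub>F n in sequentially. 0 \<le> x n / (1 + x n)" using x by simp
    have "x n / (1 + x n) = 1 - 1 / (1 + x n)" for n using x[of n] by (simp add: field_simps)
    thus "\<forall>\<^sub>F n in sequentially. x n / (1 + x n) \<le> 1 - (1 - a n) ^ n"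
      using one_minus_power_le_inverse[OF a] by (simp add: x_def)
  qed
  \<comment> \<open>Invert \<open>u = x / (1 + x)\<close> as \<open>x = u / (1 - u)\<close>.\<close>
  hence "(\<lambda>n. (x n / (1 + x n)) / (1 - x n / (1 + x n))) \<longlonglongrightarrow> 0 / (1 - 0)"
    by (intro tendsto_intros) auto
  moreover have "(x n / (1 + x n)) / (1 - x n / (1 + x n)) = x n" for n
    using x[of n] by (simp add: field_simps)
  ultimately show "(\<lambda>n. real n * a n) \<longlonglongrightarrow> 0" by (simp add: x_def)
next
  assume lim: "(\<lambda>n. real n * a n) \<longlonglongrightarrow> 0"
  show "(\<lambda>n. 1 - (1 - a n) ^ n) \<longlonglongrightarrow> 0"
  proof (rule tendsto_sandwich[OF _ _ tendsto_const lim])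
    show "\<forall>\<^sub>F n in sequentially. 0 \<le> 1 - (1 - a n) ^ n"
      by (intro always_eventually allI) (use a in \<open>auto intro!: power_le_one\<close>)
    show "\<forall>\<^sub>F n in sequentially. 1 - (1 - a n) ^ n \<le> real n * a n"
      using Bernoulli_inequality[of "- a _"] a by (auto simp: algebra_simps)
  qed
qed

lemma power_one_minus_tendsto_0_iff:
  fixes a :: "nat \<Rightarrow> real"
  assumes a: "\<And>n. 0 \<le> a n" "\<And>n. a n \<le> 1"
  shows "(\<lambda>n. (1 - a n) ^ n) \<longlonglongrightarrow> 0 \<longleftrightarrow> filterlim (\<lambda>n. real n * a n) at_top sequentially"
proof
  assume lim: "(\<lambda>n. (1 - a n) ^ n) \<longlonglongrightarrow> 0"
  show "filterlim (\<lambda>n. real n * a n) at_top sequentially"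
    unfolding filterlim_at_top
  proof
    fix Z :: real
    define Z' where "Z' = max Z 1"
    have "\<forall>\<^sub>F n in sequentially. (1 - a n) ^ n < exp (- 2 * Z')"
      using order_tendstoD(2)[OF lim, of "exp (- 2 * Z')"] by simp
    moreover have "\<forall>\<^sub>F n in sequentially. 2 * Z' \<le> real n" by real_asymp
    ultimately show "\<forall>\<^sub>F n in sequentially. Z \<le> real n * a n"
    proof eventually_elim
      case (elim n)
      show ?case
      proof (rule ccontr)
        assume "\<not> Z \<le> real n * a n"
        hence small: "real n * a n < Z'" by (simp add: Z'_def)
        have "1 \<le> Z'" by (simp add: Z'_def)
        hence "real n * a n \<le> real n * (1 / 2)" and "0 < real n"
          using elim(2) small by linarith+
        hence "a n \<le> 1 / 2" by simp
        hence "exp (- 2 * a n * real n) \<le> (1 - a n) ^ n"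
          using a by (intro exp_le_one_minus_power)
        moreover have "exp (- 2 * Z') \<le> exp (- 2 * a n * real n)"
          using small by (simp add: mult.commute)
        ultimately show False using elim(1) by linarith
      qed
    qed
  qed
next
  assume lim: "filterlim (\<lambda>n. real n * a n) at_top sequentially"
  have "filterlim (\<lambda>n. 1 + real n * a n) at_top sequentially"
    by (rule filterlim_tendsto_add_at_top[OF tendsto_const lim])
  hence "(\<lambda>n. 1 / (1 + real n * a n)) \<longlonglongrightarrow> 0"
    by (intro tendsto_divide_0[OF tendsto_const]) (simp add: filterlim_at_top_imp_at_infinity)
  from tendsto_sandwich[OF _ _ tendsto_const this]
  show "(\<lambda>n. (1 - a n) ^ n) \<longlonglongrightarrow> 0"
    using a one_minus_power_le_inverse[OF a] by auto
qed

lemma yz_nonneg: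
  assumes "\<And>k. 0 \<le> p k" "summable p"
  shows "0 \<le> yz p m"
proof -
  have "summable (\<lambda>i. p (Suc (nat m) + i))"
    using assms(2) summable_iff_shift[of p "Suc (nat m)"] by (simp add: add.commute)
  thus ?thesis using assms(1) by (simp add: yz_def suminf_nonneg)
qed

lemma sk_nonneg:
  assumes "\<And>k. 0 \<le> p k" "summable p"
  shows "0 \<le> sk p \<delta> k"
  using assms yz_nonneg[OF assms] by (simp add: sk_def pz_def)

lemma mono_theta:
  assumes "\<And>k. 0 \<le> sk p \<delta> k"
  shows "mono (theta p \<delta>)"
  by (rule monoI) (unfold theta_def, rule sum_mono2, use assms in auto)

lemma le_Theta_iff:
  assumes sk: "\<And>k. 0 \<le> sk p \<delta> k" and t: "sk p \<delta> 0 \<le> t" "ereal t < theta_inf p \<delta>"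
  shows "k \<le> Theta p \<delta> t \<longleftrightarrow> theta p \<delta> k \<le> t"
proof -
  have "theta_inf p \<delta> = (SUP n. \<Sum>i<n. ereal (sk p \<delta> i))"
    unfolding theta_inf_def by (rule suminf_ereal_eq_SUP) (simp add: sk)
  with t obtain N where N: "ereal t < (\<Sum>i<N. ereal (sk p \<delta> i))"
    by (auto simp: less_SUP_iff)
  with t sk[of 0] obtain N' where "N = Suc N'" by (cases N) auto
  with N have "t < theta p \<delta> N'" by (simp add: theta_def lessThan_Suc_atMost)
  hence bounded: "k' < N'" if "theta p \<delta> k' \<le> t" for k'
    using that monoD[OF mono_theta[OF sk], of N' k'] by (meson linorder_not_le order.strict_trans2)
  have "theta p \<delta> 0 \<le> t" using t by (simp add: theta_def)
  hence "theta p \<delta> (Theta p \<delta> t) \<le> t"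
    unfolding Theta_def by (rule GreatestI_nat) (use bounded in \<open>auto intro: less_imp_le\<close>)
  moreover have "k \<le> Theta p \<delta> t" if "theta p \<delta> k \<le> t"
    unfolding Theta_def by (rule Greatest_le_nat[of _ k N']) (use that bounded in \<open>auto intro: less_imp_le\<close>)
  ultimately show ?thesis
    using monoD[OF mono_theta[OF sk], of k "Theta p \<delta> t"] by auto
qed

lemma (in prob_space) sums_prob_nat_greater:
  assumes Z: "Z \<in> measurable M (count_space UNIV)"
  shows "(\<lambda>i. prob {\<omega> \<in> space M. Z \<omega> = Suc k + i}) sums prob {\<omega> \<in> space M. k < Z \<omega>}"
proof -
  have "(\<Union>i. {\<omega> \<in> space M. Z \<omega> = Suc k + i}) = {\<omega> \<in> space M. k < Z \<omega>}"
  proof safe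
    fix \<omega> assume "\<omega> \<in> space M" "k < Z \<omega>"
    thus "\<omega> \<in> (\<Union>i. {\<omega> \<in> space M. Z \<omega> = Suc k + i})" by (intro UN_I[of "Z \<omega> - Suc k"]) auto
  qed auto
  moreover have "(\<lambda>i. prob {\<omega> \<in> space M. Z \<omega> = Suc k + i})
      sums prob (\<Union>i. {\<omega> \<in> space M. Z \<omega> = Suc k + i})"
  proof (rule finite_measure_UNION)
    show "range (\<lambda>i. {\<omega> \<in> space M. Z \<omega> = Suc k + i}) \<subseteq> events"
      using measurable_sets[OF Z, of "{Suc k + _}"] by (auto simp: vimage_def Int_def conj_commute)
  qed (auto simp: disjoint_family_on_def)
  ultimately show ?thesis by simp
qed

context prob_space
begin

context
  fixes Z :: "'a \<Rightarrow> nat" and p :: "nat \<Rightarrow> real"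
  assumes Z: "Z \<in> measurable M (count_space UNIV)"
    and p: "\<And>k. p k = prob {\<omega> \<in> space M. Z \<omega> = k}"
begin

lemma yz_eq_prob_greater: "yz p (int k) = prob {\<omega> \<in> space M. k < Z \<omega>}"
  using sums_unique[OF sums_prob_nat_greater[OF Z, of k]] by (simp add: yz_def p)

lemma summable_distribution: "summable p"
  using sums_summable[OF sums_prob_nat_greater[OF Z, of 0]] summable_Suc_iff[of p] by (simp add: p)

lemma sk_nonneg_distribution: "0 \<le> sk p \<delta> k"
  by (rule sk_nonneg[OF _ summable_distribution]) (simp add: p)

lemma yTheta_eq_prob_theta_greater:
  fixes \<delta> :: int
  defines "tail \<equiv> \<lambda>t. prob {\<omega> \<in> space M. t < theta p \<delta> (Z \<omega>)}"
  shows "yTheta p \<delta> tail t = tail t"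
proof (cases "sk p \<delta> 0 \<le> t \<and> ereal t < theta_inf p \<delta>")
  case True
  hence "{\<omega> \<in> space M. t < theta p \<delta> (Z \<omega>)} = {\<omega> \<in> space M. Theta p \<delta> t < Z \<omega>}"
    using le_Theta_iff[OF sk_nonneg_distribution] by (auto simp flip: not_le)
  thus ?thesis using True by (simp add: yTheta_def tail_def yz_eq_prob_greater)
qed (auto simp: yTheta_def)

end

end

locale iid_sequence = prob_space M for M :: "'a measure" and X :: "nat \<Rightarrow> 'a \<Rightarrow> 'b" +
  assumes measurable_X: "\<And>i. i \<ge> 1 \<Longrightarrow> X i \<in> measurable M (count_space UNIV)"
    and indep_X: "indep_vars (\<lambda>_. count_space UNIV) X {1..}"
    and distr_X: "\<And>i. i \<ge> 1 \<Longrightarrow> distr M (count_space UNIV) (X i) = distr M (count_space UNIV) (X 1)"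
begin

lemma sets_Collect_X: "i \<ge> 1 \<Longrightarrow> {\<omega> \<in> space M. P (X i \<omega>)} \<in> events"
  using measurable_sets[OF measurable_X, of i "{k. P k}"] by (simp add: vimage_def Int_def conj_commute)

lemma prob_X_eq_prob_X1:
  assumes "i \<ge> 1"
  shows "prob {\<omega> \<in> space M. P (X i \<omega>)} = prob {\<omega> \<in> space M. P (X 1 \<omega>)}"
proof -
  have "prob {\<omega> \<in> space M. P (X j \<omega>)} = measure (distr M (count_space UNIV) (X j)) {k. P k}"
    if "j \<ge> 1" for j
    using measurable_X[OF that] by (subst measure_distr) (auto intro!: arg_cong[where f = prob])
  thus ?thesis using assms distr_X[OF assms] by simp
qed

lemma prob_all_X:
  "prob {\<omega> \<in> space M. \<forall>i\<in>{1..n}. P (X i \<omega>)} = prob {\<omega> \<in> space M. P (X 1 \<omega>)} ^ n"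
proof (cases "n = 0")
  case False
  have "indep_events (\<lambda>i. {\<omega> \<in> space M. P (X i \<omega>)}) {1..}"
    by (rule indep_eventsI_indep_vars[OF indep_X]) auto
  hence "prob (\<Inter>i\<in>{1..n}. {\<omega> \<in> space M. P (X i \<omega>)}) = (\<Prod>i\<in>{1..n}. prob {\<omega> \<in> space M. P (X i \<omega>)})"
    using False unfolding indep_events_def by (auto simp del: atLeastAtMost_iff)
  moreover have "(\<Inter>i\<in>{1..n}. {\<omega> \<in> space M. P (X i \<omega>)}) = {\<omega> \<in> space M. \<forall>i\<in>{1..n}. P (X i \<omega>)}"
  proof (intro equalityI subsetI)
    fix \<omega> assume "\<omega> \<in> (\<Inter>i\<in>{1..n}. {\<omega> \<in> space M. P (X i \<omega>)})"
    moreover have "1 \<in> {1..n}" using False by simp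
    ultimately show "\<omega> \<in> {\<omega> \<in> space M. \<forall>i\<in>{1..n}. P (X i \<omega>)}" by blast
  qed auto
  moreover have "(\<Prod>i\<in>{1..n}. prob {\<omega> \<in> space M. P (X i \<omega>)})
      = (\<Prod>i\<in>{1..n}. prob {\<omega> \<in> space M. P (X 1 \<omega>)})"
    by (rule prod.cong[OF refl prob_X_eq_prob_X1]) simp
  ultimately show ?thesis by simp
qed (simp add: prob_space)

lemma sets_Collect_all_X: "{\<omega> \<in> space M. \<forall>i\<in>{1..n}. P (X i \<omega>)} \<in> events"
  by (rule sets.sets_Collect_finite_All) (auto intro: sets_Collect_X)

context
  fixes f :: "'b \<Rightarrow> real" and n :: nat
  assumes n: "n \<ge> 1"
begin

lemma prob_Max_le:
  "prob {\<omega> \<in> space M. Max ((\<lambda>i. f (X i \<omega>)) ` {1..n}) \<le> t}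
    = (1 - prob {\<omega> \<in> space M. t < f (X 1 \<omega>)}) ^ n"
proof -
  have "prob {\<omega> \<in> space M. t < f (X 1 \<omega>)} = prob (space M - {\<omega> \<in> space M. f (X 1 \<omega>) \<le> t})"
    by (auto intro!: arg_cong[where f = prob])
  also have "\<dots> = 1 - prob {\<omega> \<in> space M. f (X 1 \<omega>) \<le> t}"
    by (rule prob_compl) (auto intro: sets_Collect_X)
  finally show ?thesis
    using n prob_all_X[of n "\<lambda>k. f k \<le> t"] by simp
qed

lemma prob_Max_deviation_bounds:
  fixes c \<beta> \<epsilon> :: real
  defines "G \<equiv> \<lambda>t. prob {\<omega> \<in> space M. t < f (X 1 \<omega>)}"
    and "D \<equiv> prob {\<omega> \<in> space M. \<epsilon> < \<bar>Max ((\<lambda>i. f (X i \<omega>)) ` {1..n}) - c\<bar> / \<beta>}"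
  assumes "0 < \<epsilon>" "0 < \<beta>"
  shows "1 - (1 - G (\<epsilon> * \<beta> + c)) ^ n \<le> D"
    and "(1 - G (- (2 * \<epsilon>) * \<beta> + c)) ^ n \<le> D"
    and "D \<le> 1 - (1 - G (\<epsilon> * \<beta> + c)) ^ n + (1 - G (- \<epsilon> * \<beta> + c)) ^ n"
proof -
  define Mx where "Mx \<omega> = Max ((\<lambda>i. f (X i \<omega>)) ` {1..n})" for \<omega>
  define A where "A t = {\<omega> \<in> space M. Mx \<omega> \<le> t}" for t
  define B where "B t = {\<omega> \<in> space M. Mx \<omega> < t}" for t
  have A_eq: "A t = {\<omega> \<in> space M. \<forall>i\<in>{1..n}. f (X i \<omega>) \<le> t}"
    and B_eq: "B t = {\<omega> \<in> space M. \<forall>i\<in>{1..n}. f (X i \<omega>) < t}" for t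
    using n by (auto simp: A_def B_def Mx_def)
  have sets: "A t \<in> events" "B t \<in> events" for t
    unfolding A_eq B_eq by (rule sets_Collect_all_X)+
  have prob_A: "prob (A t) = (1 - G t) ^ n" for t
    unfolding A_def Mx_def G_def by (rule prob_Max_le)
  define E where "E = {\<omega> \<in> space M. \<epsilon> < \<bar>Mx \<omega> - c\<bar> / \<beta>}"
  have deviation_iff: "\<epsilon> < \<bar>x - c\<bar> / \<beta> \<longleftrightarrow> \<not> x \<le> \<epsilon> * \<beta> + c \<or> x < - \<epsilon> * \<beta> + c" for x
    using \<open>0 < \<beta>\<close> by (simp add: pos_less_divide_eq) linarith
  have E_eq: "E = (space M - A (\<epsilon> * \<beta> + c)) \<union> B (- \<epsilon> * \<beta> + c)"
    unfolding E_def A_def B_def deviation_iff by auto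
  have E: "E \<in> events" unfolding E_eq using sets by auto
  have D: "D = prob E" by (simp add: D_def E_def Mx_def)
  have "prob (space M - A (\<epsilon> * \<beta> + c)) \<le> prob E"
    by (rule finite_measure_mono[OF _ E]) (auto simp: E_eq)
  thus "1 - (1 - G (\<epsilon> * \<beta> + c)) ^ n \<le> D"
    using prob_compl[OF sets(1)] prob_A D by simp
  have "A (- (2 * \<epsilon>) * \<beta> + c) \<subseteq> B (- \<epsilon> * \<beta> + c)"
    using mult_pos_pos[OF \<open>0 < \<epsilon>\<close> \<open>0 < \<beta>\<close>] by (auto simp: A_def B_def)
  hence "prob (A (- (2 * \<epsilon>) * \<beta> + c)) \<le> prob E"
    by (intro finite_measure_mono[OF _ E]) (auto simp: E_eq)
  thus "(1 - G (- (2 * \<epsilon>) * \<beta> + c)) ^ n \<le> D"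
    using prob_A D by simp
  have "prob E \<le> prob (space M - A (\<epsilon> * \<beta> + c)) + prob (B (- \<epsilon> * \<beta> + c))"
    unfolding E_eq by (rule measure_Un_le) (use sets in auto)
  also have "prob (B (- \<epsilon> * \<beta> + c)) \<le> prob (A (- \<epsilon> * \<beta> + c))"
    by (rule finite_measure_mono[OF _ sets(1)]) (auto simp: A_def B_def)
  finally show "D \<le> 1 - (1 - G (\<epsilon> * \<beta> + c)) ^ n + (1 - G (- \<epsilon> * \<beta> + c)) ^ n"
    using prob_compl[OF sets(1)] prob_A D by simp
qed

end

theorem tendsto_prob_Max_deviation_iff:
  fixes f :: "'b \<Rightarrow> real" and b c :: "nat \<Rightarrow> real" and G :: "real \<Rightarrow> real"
  assumes G_eq: "\<And>t. G t = prob {\<omega> \<in> space M. t < f (X 1 \<omega>)}"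
    and b: "\<And>n. n \<ge> 1 \<Longrightarrow> 0 < b n"
  shows "(\<forall>\<epsilon>>0. (\<lambda>n. prob {\<omega> \<in> space M. \<epsilon> < \<bar>Max ((\<lambda>i. f (X i \<omega>)) ` {1..n}) - c n\<bar> / b n})
            \<longlonglongrightarrow> 0)
    \<longleftrightarrow> (\<forall>\<epsilon>>0. (\<lambda>n. real n * G (\<epsilon> * b n + c n)) \<longlonglongrightarrow> 0
            \<and> filterlim (\<lambda>n. real n * G (- \<epsilon> * b n + c n)) at_top sequentially)"
proof -
  define D where
    "D \<epsilon> n = prob {\<omega> \<in> space M. \<epsilon> < \<bar>Max ((\<lambda>i. f (X i \<omega>)) ` {1..n}) - c n\<bar> / b n}" for \<epsilon> n
  have G: "0 \<le> G t" "G t \<le> 1" for t by (simp_all add: G_eq)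
  have D: "0 \<le> D \<epsilon> n" for \<epsilon> n by (simp add: D_def)
  have ev: "\<forall>\<^sub>F n in sequentially. n \<ge> 1" by (rule eventually_ge_at_top)
  have bounds:
    "1 - (1 - G (\<epsilon> * b n + c n)) ^ n \<le> D \<epsilon> n"
    "(1 - G (- (2 * \<epsilon>) * b n + c n)) ^ n \<le> D \<epsilon> n"
    "D \<epsilon> n \<le> 1 - (1 - G (\<epsilon> * b n + c n)) ^ n + (1 - G (- \<epsilon> * b n + c n)) ^ n"
    if "n \<ge> 1" "0 < \<epsilon>" for \<epsilon> n
    using prob_Max_deviation_bounds[OF that b[OF that(1)]] unfolding G_eq D_def by auto
  show ?thesis
    unfolding D_def[symmetric]
  proof (intro iffI allI impI conjI)
    fix \<epsilon> :: real
    assume lim: "\<forall>\<epsilon>>0. D \<epsilon> \<longlonglongrightarrow> 0" and "0 < \<epsilon>"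
    have "(\<lambda>n. 1 - (1 - G (\<epsilon> * b n + c n)) ^ n) \<longlonglongrightarrow> 0"
    proof (rule tendsto_sandwich[OF _ _ tendsto_const])
      show "\<forall>\<^sub>F n in sequentially. 0 \<le> 1 - (1 - G (\<epsilon> * b n + c n)) ^ n"
        by (intro always_eventually allI) (use G in \<open>auto intro!: power_le_one\<close>)
      show "\<forall>\<^sub>F n in sequentially. 1 - (1 - G (\<epsilon> * b n + c n)) ^ n \<le> D \<epsilon> n"
        using ev by eventually_elim (use bounds(1) \<open>0 < \<epsilon>\<close> in auto)
    qed (use lim \<open>0 < \<epsilon>\<close> in auto)
    thus "(\<lambda>n. real n * G (\<epsilon> * b n + c n)) \<longlonglongrightarrow> 0"
      by (simp add: one_minus_power_tendsto_0_iff G)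
    \<comment> \<open>The lower bound for the left deviation is available only at twice the radius.\<close>
    have "(\<lambda>n. (1 - G (- (2 * (\<epsilon> / 2)) * b n + c n)) ^ n) \<longlonglongrightarrow> 0"
    proof (rule tendsto_sandwich[OF _ _ tendsto_const])
      show "\<forall>\<^sub>F n in sequentially. 0 \<le> (1 - G (- (2 * (\<epsilon> / 2)) * b n + c n)) ^ n"
        by (intro always_eventually allI) (use G in auto)
      show "\<forall>\<^sub>F n in sequentially. (1 - G (- (2 * (\<epsilon> / 2)) * b n + c n)) ^ n \<le> D (\<epsilon> / 2) n"
        using ev by eventually_elim (rule bounds(2), use \<open>0 < \<epsilon>\<close> in auto)
    qed (use lim \<open>0 < \<epsilon>\<close> in auto)
    thus "filterlim (\<lambda>n. real n * G (- \<epsilon> * b n + c n)) at_top sequentially"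
      by (simp add: power_one_minus_tendsto_0_iff G)
  next
    fix \<epsilon> :: real
    assume lim: "\<forall>\<epsilon>>0. (\<lambda>n. real n * G (\<epsilon> * b n + c n)) \<longlonglongrightarrow> 0
        \<and> filterlim (\<lambda>n. real n * G (- \<epsilon> * b n + c n)) at_top sequentially"
      and "0 < \<epsilon>"
    have "(\<lambda>n. 1 - (1 - G (\<epsilon> * b n + c n)) ^ n) \<longlonglongrightarrow> 0"
      using lim \<open>0 < \<epsilon>\<close> by (simp add: one_minus_power_tendsto_0_iff G)
    moreover have "(\<lambda>n. (1 - G (- \<epsilon> * b n + c n)) ^ n) \<longlonglongrightarrow> 0"
      using lim \<open>0 < \<epsilon>\<close> by (simp add: power_one_minus_tendsto_0_iff G)
    ultimately have sum: "(\<lambda>n. 1 - (1 - G (\<epsilon> * b n + c n)) ^ n + (1 - G (- \<epsilon> * b n + c n)) ^ n)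
        \<longlonglongrightarrow> 0 + 0"
      by (rule tendsto_add)
    show "D \<epsilon> \<longlonglongrightarrow> 0"
    proof (rule tendsto_sandwich[OF _ _ tendsto_const])
      show "\<forall>\<^sub>F n in sequentially. 0 \<le> D \<epsilon> n" by (simp add: D)
      show "\<forall>\<^sub>F n in sequentially.
          D \<epsilon> n \<le> 1 - (1 - G (\<epsilon> * b n + c n)) ^ n + (1 - G (- \<epsilon> * b n + c n)) ^ n"
        using ev by eventually_elim (rule bounds(3), use \<open>0 < \<epsilon>\<close> in auto)
    qed (use sum in simp)
  qed
qed

end

theorem corollaryA1:
  fixes M :: "'a measure" and X :: "nat \<Rightarrow> 'a \<Rightarrow> nat" and \<delta> :: int
    and b :: "nat \<Rightarrow> real"
  defines "p \<equiv> (\<lambda>k. measure M {\<omega> \<in> space M. X 1 \<omega> = k})"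
  defines "tail \<equiv> (\<lambda>t. measure M {\<omega> \<in> space M. theta p \<delta> (X 1 \<omega>) > t})"
  defines "Mx \<equiv> (\<lambda>n \<omega>. Max ((\<lambda>i. X i \<omega>) ` {1..n}))"
  assumes "prob_space M"
    and meas: "\<And>i. i \<ge> 1 \<Longrightarrow> X i \<in> measurable M (count_space UNIV)"
    and indep: "prob_space.indep_vars M (\<lambda>_. count_space UNIV) X {1..}"
    and ident: "\<And>i. i \<ge> 1 \<Longrightarrow> distr M (count_space UNIV) (X i) = distr M (count_space UNIV) (X 1)"
    and ppos: "\<And>k. p k > 0"
    and bpos: "\<And>n. n \<ge> 1 \<Longrightarrow> b n > 0"
  shows "(\<forall>\<epsilon>>0. ((\<lambda>n. measure M {\<omega> \<in> space M.
              \<bar>theta p \<delta> (Mx n \<omega>) - theta p \<delta> (mt p (real n))\<bar> / b n > \<epsilon>}) \<longlonglongrightarrow> 0))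
    \<longleftrightarrow>
    (\<forall>\<epsilon>>0. ((\<lambda>n. real n * yTheta p \<delta> tail (\<epsilon> * b n + theta p \<delta> (mt p (real n)))) \<longlonglongrightarrow> 0)
        \<and> filterlim (\<lambda>n. real n * yTheta p \<delta> tail (- \<epsilon> * b n + theta p \<delta> (mt p (real n))))
            at_top sequentially)"
proof -
  interpret iid_sequence M X
    by (rule iid_sequence.intro[OF assms(4) iid_sequence_axioms.intro[OF meas indep ident]])
  have X1: "X 1 \<in> measurable M (count_space UNIV)" by (simp add: meas)
  have p_eq: "p k = prob {\<omega> \<in> space M. X 1 \<omega> = k}" for k by (simp add: p_def)
  have mono: "mono (theta p \<delta>)"
    by (rule mono_theta, rule sk_nonneg_distribution[OF X1 p_eq])
  have Max: "\<forall>\<^sub>F n in sequentially.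
      \<forall>\<omega>. theta p \<delta> (Mx n \<omega>) = Max ((\<lambda>i. theta p \<delta> (X i \<omega>)) ` {1..n})"
    using eventually_ge_at_top[of 1]
    by eventually_elim (simp add: Mx_def mono_Max_commute[OF mono] image_image)
  have deviation:
    "(\<lambda>n. prob {\<omega> \<in> space M. \<epsilon> < \<bar>theta p \<delta> (Mx n \<omega>) - c n\<bar> / b n}) \<longlonglongrightarrow> 0 \<longleftrightarrow>
     (\<lambda>n. prob {\<omega> \<in> space M. \<epsilon> < \<bar>Max ((\<lambda>i. theta p \<delta> (X i \<omega>)) ` {1..n}) - c n\<bar> / b n})
       \<longlonglongrightarrow> 0" for \<epsilon> c
    by (rule tendsto_cong) (use Max in \<open>eventually_elim, simp\<close>)
  have tail_eq: "tail t = prob {\<omega> \<in> space M. t < theta p \<delta> (X 1 \<omega>)}" for t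
    by (simp add: tail_def)
  have yTheta: "yTheta p \<delta> tail = tail"
    using yTheta_eq_prob_theta_greater[OF X1 p_eq] by (auto simp: tail_def)
  show ?thesis
    unfolding deviation yTheta
    by (rule tendsto_prob_Max_deviation_iff[where f = "theta p \<delta>", OF tail_eq bpos])
qed

end
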